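(* For every combinatorial auction with $d$-strong-SOS valuations ($d\ge1$) over single-dimensional signals $s_i\in\{0,1,\dots,k-1\}$ ($k\ge2$ a power of $2$), the mechanism that runs Random Bucket with probability $\frac{d\log_2k}{d\log_2k+2}$ and Random Sampling otherwise is universally ex-post IC-IR and gives a $\big(d(d+1)\log_2k+2(d+1)\big)$-approximation to the optimal social welfare.
   Context: Setting: $n$ agents, $m$ items; agent $i$ has private signal $s_i$; value for bundle $T$ is $v_{iT}(\mathbf{s})\ge0$, public, weakly increasing in each coordinate, strictly in $s_i$. $d$-strong-SOS: for every $j$, $\delta\ge0$, and profiles $\mathbf{s}'\le\mathbf{s}$ coordinate-wise, $d\big(v(\mathbf{s}'_{-j},s'_j+\delta)-v(\mathbf{s}'_{-j},s'_j)\big)\ge v(\mathbf{s}_{-j},s_j+\delta)-v(\mathbf{s}_{-j},s_j)$; every $v_{iT}$ is $d$-strong-SOS. Allocations assign disjoint bundles. Random Bucket: choose $\ell$ uniformly in $\{1,\dots,\log_2k\}$; $N_{B_\ell}=\{i:s_i\ge2^{\ell-1}\}$; for $i\in N_{B_\ell}$, $\bar v_{iT}=v_{iT}(\mathbf{s}_{N_{\neg B_\ell}},\mathbf{2^{\ell-1}}_{N_{B_\ell}})$, else $0$; allocate a $\bar v$-welfare-maximizing allocation among $N_{B_\ell}$; agent receiving $\bar T_i$ pays $v_{i\bar T_i}(\mathbf{s}_{-i},2^{\ell-1}-1)$. Random Sampling: split agents uniformly at random into $A,B$; for $i\in B$, $\tilde v_{iT}=v_{iT}(\mathbf{s}_A,\mathbf{0}_B)$,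 for $i\in A$, $0$; allocate a $\tilde v$-welfare-maximizing allocation among $B$; no payments. *)

theory Defs
  imports Complex_Main
begin

text \<open>Agents are the elements of a finite type 'a (n = CARD('a)), items the elements of
a finite type 'b (m = CARD('b)).  The valuation v i T s is agent i's value for
bundle T at signal profile s.\<close>

definition valid_profile :: "nat \<Rightarrow> ('a \<Rightarrow> nat) \<Rightarrow> bool" where
  "valid_profile k s \<longleftrightarrow> (\<forall>i. s i < k)"

definition strong_SOS :: "nat \<Rightarrow> real \<Rightarrow> (('a \<Rightarrow> nat) \<Rightarrow> real) \<Rightarrow> bool" where
  "strong_SOS k d f \<longleftrightarrow>
     (\<forall>j (\<delta>::nat) s s'. valid_profile k s \<and> valid_profile k s' \<and> (\<forall>i. s' i \<le> s i)
        \<and> s j + \<delta> < k \<longrightarrow>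
        d * (f (s'(j := s' j + \<delta>)) - f s') \<ge> f (s(j := s j + \<delta>)) - f s)"

definition valid_valuations ::
  "nat \<Rightarrow> real \<Rightarrow> ('a \<Rightarrow> 'b set \<Rightarrow> ('a \<Rightarrow> nat) \<Rightarrow> real) \<Rightarrow> bool" where
  "valid_valuations k d v \<longleftrightarrow>
     (\<forall>i T s. valid_profile k s \<longrightarrow> v i T s \<ge> 0)
   \<and> (\<forall>i s. v i {} s = 0)
   \<and> (\<forall>i T s j x y. valid_profile k s \<and> x \<le> y \<and> y < k \<longrightarrow>
         v i T (s(j := x)) \<le> v i T (s(j := y)))
   \<and> (\<forall>i T s x y. T \<noteq> {} \<and> valid_profile k s \<and> x < y \<and> y < k \<longrightarrow>
         v i T (s(i := x)) < v i T (s(i := y)))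
   \<and> (\<forall>i T. strong_SOS k d (v i T))"

text \<open>Allocations: disjoint bundles (not every item needs to be allocated).\<close>
definition feasible :: "('a \<Rightarrow> 'b set) \<Rightarrow> bool" where
  "feasible A \<longleftrightarrow> (\<forall>i j. i \<noteq> j \<longrightarrow> A i \<inter> A j = {})"

definition welfare :: "('a \<Rightarrow> 'b set \<Rightarrow> ('a \<Rightarrow> nat) \<Rightarrow> real) \<Rightarrow> ('a \<Rightarrow> nat)
    \<Rightarrow> ('a \<Rightarrow> 'b set) \<Rightarrow> real" where
  "welfare v s A = (\<Sum>i\<in>UNIV. v i (A i) s)"

definition opt_welfare :: "('a::finite \<Rightarrow> 'b::finite set \<Rightarrow> ('a \<Rightarrow> nat) \<Rightarrow> real)
    \<Rightarrow> ('a \<Rightarrow> nat) \<Rightarrow> real" where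
  "opt_welfare v s = Max (welfare v s ` {A. feasible A})"

definition is_welfare_max_rule ::
  "('a set \<Rightarrow> ('a \<Rightarrow> 'b set \<Rightarrow> real) \<Rightarrow> ('a \<Rightarrow> 'b set)) \<Rightarrow> bool" where
  "is_welfare_max_rule sel \<longleftrightarrow>
     (\<forall>N w. feasible (sel N w) \<and> (\<forall>i. i \<notin> N \<longrightarrow> sel N w i = {})
        \<and> (\<forall>A. feasible A \<and> (\<forall>i. i \<notin> N \<longrightarrow> A i = {}) \<longrightarrow>
              (\<Sum>i\<in>UNIV. w i (A i)) \<le> (\<Sum>i\<in>UNIV. w i (sel N w i))))"

type_synonym ('a, 'b) mech = "('a \<Rightarrow> nat) \<Rightarrow> ('a \<Rightarrow> 'b set) \<times> ('a \<Rightarrow> real)"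

definition random_bucket ::
  "('a set \<Rightarrow> ('a \<Rightarrow> 'b set \<Rightarrow> real) \<Rightarrow> ('a \<Rightarrow> 'b set))
   \<Rightarrow> ('a \<Rightarrow> 'b set \<Rightarrow> ('a \<Rightarrow> nat) \<Rightarrow> real) \<Rightarrow> nat \<Rightarrow> ('a, 'b) mech" where
  "random_bucket sel v l r =
     (let t = (2::nat) ^ (l - 1);
          NB = {i. r i \<ge> t};
          vbar = (\<lambda>i T. if i \<in> NB then v i T (\<lambda>j. if j \<in> NB then t else r j) else 0);
          A = sel NB vbar
      in (A, (\<lambda>i. if i \<in> NB then v i (A i) (r(i := t - 1)) else 0)))"

text \<open>Random Sampling with partition (As, -As): agents in -As form B.\<close>
definition random_sampling ::
  "('a set \<Rightarrow> ('a \<Rightarrow> 'b set \<Rightarrow> real) \<Rightarrow> ('a \<Rightarrow> 'b set))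
   \<Rightarrow> ('a \<Rightarrow> 'b set \<Rightarrow> ('a \<Rightarrow> nat) \<Rightarrow> real) \<Rightarrow> 'a set \<Rightarrow> ('a, 'b) mech" where
  "random_sampling sel v As r =
     (let vtil = (\<lambda>i T. if i \<notin> As then v i T (\<lambda>j. if j \<in> As then r j else 0) else 0)
      in (sel (- As) vtil, (\<lambda>i. 0)))"

text \<open>Ex-post IC and IR of a deterministic mechanism (true profile s, agent i
misreporting x while others report truthfully).\<close>
definition utility :: "('a \<Rightarrow> 'b set \<Rightarrow> ('a \<Rightarrow> nat) \<Rightarrow> real) \<Rightarrow> ('a, 'b) mech
    \<Rightarrow> ('a \<Rightarrow> nat) \<Rightarrow> 'a \<Rightarrow> ('a \<Rightarrow> nat) \<Rightarrow> real" where
  "utility v M s i r = v i (fst (M r) i) s - snd (M r) i"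

definition expost_IC_IR :: "nat \<Rightarrow> ('a \<Rightarrow> 'b set \<Rightarrow> ('a \<Rightarrow> nat) \<Rightarrow> real)
    \<Rightarrow> ('a, 'b) mech \<Rightarrow> bool" where
  "expost_IC_IR k v M \<longleftrightarrow>
     (\<forall>s i. valid_profile k s \<longrightarrow>
        utility v M s i s \<ge> 0 \<and>
        (\<forall>x<k. utility v M s i (s(i := x)) \<le> utility v M s i s))"

text \<open>Expected welfare of the combined mechanism (k = 2^r): Random Bucket with
probability p (l uniform on {1..r}), else Random Sampling (uniform random subset As).\<close>
definition combined_expected_welfare ::
  "('a::finite set \<Rightarrow> ('a \<Rightarrow> 'b set \<Rightarrow> real) \<Rightarrow> ('a \<Rightarrow> 'b set))
   \<Rightarrow> ('a \<Rightarrow> 'b set \<Rightarrow> ('a \<Rightarrow> nat) \<Rightarrow> real) \<Rightarrow> nat \<Rightarrow> real \<Rightarrow> ('a \<Rightarrow> nat) \<Rightarrow> real" where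
  "combined_expected_welfare sel v r p s =
     p * ((\<Sum>l\<in>{1..r}. welfare v s (fst (random_bucket sel v l s))) / real r)
   + (1 - p) * ((\<Sum>As\<in>(UNIV :: 'a set set). welfare v s (fst (random_sampling sel v As s)))
                 / 2 ^ card (UNIV :: 'a set))"

end

theory Submission
  imports Defs
begin

text \<open>Random Bucket with threshold t behaves like a posted price for agent i: its bundle is
  empty below t and independent of its report above t, where it pays its value at signal t - 1;
  Random Sampling ignores i's own report and charges nothing.  For the approximation, split the
  optimum into the gains v_i(s) - v_i(s_-i, 0) and the values v_i(s_-i, 0).  If s_i lies in the
  dyadic bucket [t, 2t), strong-SOS bounds the gain by d(d + 1) times the value at the profile
  capped at t, which bucket t competes for.  A random split (A, B) puts i in B half the time, and
  strong-SOS bounds v_i(s_-i, 0) by (d + 1)/2 times v_i(s_A) + v_i(s_B-i); summing a split with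
  its complement yields a factor 2(d + 1).  The mixing probability equalizes both guarantees.\<close>

lemma valid_profile_pos: "valid_profile k s \<Longrightarrow> 0 < k"
  unfolding valid_profile_def by (meson le_less_trans zero_le)

lemma valid_profile_le: "valid_profile k s \<Longrightarrow> (\<And>j. s' j \<le> s j) \<Longrightarrow> valid_profile k s'"
  unfolding valid_profile_def using le_less_trans by blast

lemma coordinatewise_mono_imp_mono:
  fixes f :: "('a::finite \<Rightarrow> nat) \<Rightarrow> 'c::order"
  assumes mono: "\<And>s j x y. valid_profile k s \<Longrightarrow> x \<le> y \<Longrightarrow> y < k \<Longrightarrow> f (s(j := x)) \<le> f (s(j := y))"
    and vs: "valid_profile k s" and le: "\<And>j. s' j \<le> s j"
  shows "f s' \<le> f s"
proof -
  have "\<forall>s'. (\<forall>j. s' j \<le> s j) \<longrightarrow> {j. s' j \<noteq> s j} \<subseteq> F \<longrightarrow> f s' \<le> f s" if "finite F" for F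
    using that
  proof (induction F rule: finite_induct)
    case empty
    then show ?case by (auto intro!: ext)
  next
    case (insert a F)
    show ?case
    proof (intro allI impI)
      fix s' :: "'a \<Rightarrow> nat"
      assume le': "\<forall>j. s' j \<le> s j" and diff: "{j. s' j \<noteq> s j} \<subseteq> insert a F"
      define s'' where "s'' = s'(a := s a)"
      have le'': "\<forall>j. s'' j \<le> s j" using le' by (simp add: s''_def)
      have "{j. s'' j \<noteq> s j} \<subseteq> F" using diff by (auto simp: s''_def)
      then have "f s'' \<le> f s" using insert.IH le'' by blast
      moreover have "f (s''(a := s' a)) \<le> f (s''(a := s a))"
        using mono[OF valid_profile_le[OF vs], of s'' "s' a" "s a" a] le'' le' vs
        by (simp add: valid_profile_def)
      moreover have "s''(a := s' a) = s'" "s''(a := s a) = s''" by (auto simp: s''_def)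
      ultimately show "f s' \<le> f s" by (auto intro: order_trans)
    qed
  qed
  from this[of UNIV] le show ?thesis by auto
qed

definition restrict_signals :: "('a \<Rightarrow> nat) \<Rightarrow> 'a set \<Rightarrow> 'a \<Rightarrow> nat" where
  "restrict_signals s S j = (if j \<in> S then s j else 0)"

definition cap_signals :: "nat \<Rightarrow> ('a \<Rightarrow> nat) \<Rightarrow> 'a \<Rightarrow> nat" where
  "cap_signals t s j = (if t \<le> s j then t else s j)"

lemma strong_SOSD:
  assumes "strong_SOS k d f" and "valid_profile k s" and "valid_profile k s'"
    and "\<And>i. s' i \<le> s i" and "s j + \<delta> < k"
  shows "f (s(j := s j + \<delta>)) - f s \<le> d * (f (s'(j := s' j + \<delta>)) - f s')"
  using assms unfolding strong_SOS_def by blast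

lemma strong_SOS_restrict_union_le:
  fixes f :: "('a \<Rightarrow> nat) \<Rightarrow> real"
  assumes sos: "strong_SOS k d f" and vs: "valid_profile k s"
    and "finite B" and "A \<inter> B = {}"
  shows "f (restrict_signals s (A \<union> B)) - f (restrict_signals s A)
           \<le> d * (f (restrict_signals s B) - f (\<lambda>j. 0))"
  using assms(3,4)
proof (induction B rule: finite_induct)
  case empty
  then show ?case by (simp add: restrict_signals_def)
next
  case (insert b B)
  have "b \<notin> A" and IH: "f (restrict_signals s (A \<union> B)) - f (restrict_signals s A)
                           \<le> d * (f (restrict_signals s B) - f (\<lambda>j. 0))"
    using insert by auto
  have valid: "valid_profile k (restrict_signals s S)" for S
    by (rule valid_profile_le[OF vs]) (simp add: restrict_signals_def)
  let ?big = "restrict_signals s (A \<union> B)" and ?small = "restrict_signals s B"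
  have "f (?big(b := ?big b + s b)) - f ?big \<le> d * (f (?small(b := ?small b + s b)) - f ?small)"
    by (rule strong_SOSD[OF sos valid valid])
       (use vs \<open>b \<notin> B\<close> \<open>b \<notin> A\<close> in \<open>auto simp: restrict_signals_def valid_profile_def\<close>)
  moreover have "?small(b := ?small b + s b) = restrict_signals s (insert b B)"
    and "?big(b := ?big b + s b) = restrict_signals s (A \<union> insert b B)"
    using \<open>b \<notin> B\<close> \<open>b \<notin> A\<close> by (auto simp: restrict_signals_def)
  ultimately show ?case using IH by (simp add: algebra_simps)
qed

lemma strong_SOS_partition_le:
  fixes g :: "('a::finite \<Rightarrow> nat) \<Rightarrow> real"
  assumes sos: "strong_SOS k d g" and vs: "valid_profile k s"
    and "0 \<le> d" and "0 \<le> g (\<lambda>j. 0)" and "A \<inter> B = {}"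
  shows "2 * g (restrict_signals s (A \<union> B))
           \<le> (d + 1) * (g (restrict_signals s A) + g (restrict_signals s B))"
proof -
  have "g (restrict_signals s (A \<union> B)) - g (restrict_signals s A)
        \<le> d * (g (restrict_signals s B) - g (\<lambda>j. 0))"
    by (rule strong_SOS_restrict_union_le[OF sos vs _ \<open>A \<inter> B = {}\<close>]) simp
  moreover have "B \<inter> A = {}" using \<open>A \<inter> B = {}\<close> by blast
  then have "g (restrict_signals s (A \<union> B)) - g (restrict_signals s B)
        \<le> d * (g (restrict_signals s A) - g (\<lambda>j. 0))"
    using strong_SOS_restrict_union_le[OF sos vs _ \<open>B \<inter> A = {}\<close>] by (simp add: Un_commute)
  moreover have "0 \<le> d * g (\<lambda>j. 0)" using assms(3,4) by simp
  ultimately show ?thesis by (simp add: algebra_simps)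
qed

lemma sum_subsets_not_containing:
  fixes h :: "'a::finite set \<Rightarrow> 'c::comm_semiring_1"
  shows "2 * (\<Sum>A\<in>UNIV. if i \<notin> A then h A else 0) = (\<Sum>A\<in>UNIV. h (A - {i}))"
proof -
  have "(\<Sum>A\<in>UNIV. h (A - {i}))
        = (\<Sum>A\<in>UNIV. if i \<notin> A then h (A - {i}) else 0) + (\<Sum>A\<in>UNIV. if i \<in> A then h (A - {i}) else 0)"
    by (subst sum.distrib[symmetric]) (rule sum.cong; simp)
  also have "(\<Sum>A\<in>UNIV. if i \<notin> A then h (A - {i}) else 0) = (\<Sum>A\<in>UNIV. if i \<notin> A then h A else 0)"
    by (rule sum.cong) auto
  also have "(\<Sum>A\<in>UNIV. if i \<in> A then h (A - {i}) else 0) = (\<Sum>A\<in>UNIV. if i \<notin> A then h A else 0)"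
    by (rule sum.reindex_bij_witness[where i = "\<lambda>A. if i \<in> A then A - {i} else insert i A"
                                       and j = "\<lambda>A. if i \<in> A then A - {i} else insert i A"]) auto
  finally show ?thesis by (simp add: mult_2)
qed

text \<open>Pairing each split A with its complement -A, the restrictions of s to A - {i} and to
  -A - {i} partition s(i := 0).\<close>
lemma strong_SOS_random_sampling_le:
  fixes g :: "('a::finite \<Rightarrow> nat) \<Rightarrow> real"
  assumes sos: "strong_SOS k d g" and nn: "\<And>s. valid_profile k s \<Longrightarrow> 0 \<le> g s"
    and d: "0 \<le> d" and vs: "valid_profile k s"
  shows "2 ^ card (UNIV :: 'a set) * g (s(i := 0))
           \<le> 2 * (d + 1) * (\<Sum>A\<in>UNIV. if i \<notin> A then g (restrict_signals s A) else 0)"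
proof -
  define h where "h A = g (restrict_signals s (A - {i}))" for A
  have g0: "0 \<le> g (\<lambda>j. 0)"
    using nn valid_profile_pos[OF vs] by (simp add: valid_profile_def)
  have pair: "2 * g (s(i := 0)) \<le> (d + 1) * (h A + h (- A))" for A
  proof -
    have "2 * g (restrict_signals s ((A - {i}) \<union> (- A - {i})))
          \<le> (d + 1) * (g (restrict_signals s (A - {i})) + g (restrict_signals s (- A - {i})))"
      by (rule strong_SOS_partition_le[OF sos vs d g0]) blast
    moreover have "restrict_signals s ((A - {i}) \<union> (- A - {i})) = s(i := 0)"
      by (auto simp: restrict_signals_def)
    ultimately show ?thesis by (simp add: h_def)
  qed
  have complement: "(\<Sum>A\<in>UNIV. h (- A)) = (\<Sum>A\<in>UNIV. h A)"
    by (rule sum.reindex_bij_witness[where i = uminus and j = uminus]) auto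
  have half: "(\<Sum>A\<in>UNIV. h A) = 2 * (\<Sum>A\<in>UNIV. if i \<notin> A then g (restrict_signals s A) else 0)"
    unfolding h_def by (rule sum_subsets_not_containing[symmetric])
  have card_subsets: "real (card (UNIV :: 'a set set)) = 2 ^ card (UNIV :: 'a set)"
    using card_Pow[of "UNIV :: 'a set"] by simp
  have "2 ^ card (UNIV :: 'a set) * (2 * g (s(i := 0))) = (\<Sum>A\<in>(UNIV :: 'a set set). 2 * g (s(i := 0)))"
    by (simp only: sum_constant card_subsets)
  also have "\<dots> \<le> (\<Sum>A\<in>UNIV. (d + 1) * (h A + h (- A)))"
    by (rule sum_mono) (rule pair)
  also have "\<dots> = 2 * (d + 1) * (\<Sum>A\<in>UNIV. h A)"
    by (simp add: sum_distrib_left[symmetric] sum.distrib complement)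
  finally show ?thesis unfolding half by simp
qed

text \<open>Raising s i from t to t + \<delta> with \<delta> < t gains at most d times the gain of raising it
  from 0 to \<delta>, which is at most the gain from 0 to t.\<close>
lemma strong_SOS_gain_le_half_gain:
  fixes g :: "('a \<Rightarrow> nat) \<Rightarrow> real"
  assumes sos: "strong_SOS k d g"
    and mono: "\<And>s j x y. valid_profile k s \<Longrightarrow> x \<le> y \<Longrightarrow> y < k \<Longrightarrow> g (s(j := x)) \<le> g (s(j := y))"
    and d: "0 \<le> d" and vs: "valid_profile k s" and "t \<le> s i" and "s i < 2 * t"
  shows "g s - g (s(i := 0)) \<le> (d + 1) * (g (s(i := t)) - g (s(i := 0)))"
proof -
  define \<delta> where "\<delta> = s i - t"
  have "s i < k" using vs by (simp add: valid_profile_def)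
  have "g ((s(i := t))(i := (s(i := t)) i + \<delta>)) - g (s(i := t))
        \<le> d * (g ((s(i := 0))(i := (s(i := 0)) i + \<delta>)) - g (s(i := 0)))"
    by (rule strong_SOSD[OF sos valid_profile_le[OF vs] valid_profile_le[OF vs]])
       (use \<open>t \<le> s i\<close> \<open>s i < k\<close> in \<open>auto simp: \<delta>_def\<close>)
  moreover have "(s(i := t))(i := (s(i := t)) i + \<delta>) = s" using \<open>t \<le> s i\<close> by (auto simp: \<delta>_def)
  moreover have "d * (g (s(i := \<delta>)) - g (s(i := 0))) \<le> d * (g (s(i := t)) - g (s(i := 0)))"
    using mono[OF vs, of \<delta> t i] \<open>t \<le> s i\<close> \<open>s i < 2 * t\<close> \<open>s i < k\<close> d by (intro mult_left_mono) (auto simp: \<delta>_def)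
  ultimately show ?thesis by (simp add: algebra_simps)
qed

lemma strong_SOS_gain_le_capped:
  fixes g :: "('a \<Rightarrow> nat) \<Rightarrow> real"
  assumes sos: "strong_SOS k d g" and nn: "\<And>s. valid_profile k s \<Longrightarrow> 0 \<le> g s"
    and d: "0 \<le> d" and vs: "valid_profile k s" and "t \<le> s i"
  shows "g (s(i := t)) - g (s(i := 0)) \<le> d * g (cap_signals t s)"
proof -
  let ?q = "cap_signals t s"
  have q_le: "?q j \<le> s j" for j by (simp add: cap_signals_def)
  have "s i < k" using vs by (simp add: valid_profile_def)
  have "g ((s(i := 0))(i := (s(i := 0)) i + t)) - g (s(i := 0))
        \<le> d * (g ((?q(i := 0))(i := (?q(i := 0)) i + t)) - g (?q(i := 0)))"
    by (rule strong_SOSD[OF sos valid_profile_le[OF vs] valid_profile_le[OF vs]])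
       (use q_le \<open>t \<le> s i\<close> \<open>s i < k\<close> in auto)
  moreover have "?q(i := t) = ?q" using \<open>t \<le> s i\<close> by (auto simp: cap_signals_def)
  moreover have "0 \<le> d * g (?q(i := 0))"
    using nn valid_profile_le[OF vs, of "?q(i := 0)"] q_le d by simp
  ultimately show ?thesis by (simp add: algebra_simps)
qed

lemma dyadic_bucket_exists:
  "1 \<le> (x::nat) \<Longrightarrow> x < 2 ^ r \<Longrightarrow> \<exists>l\<in>{1..r}. 2 ^ (l - 1) \<le> x \<and> x < 2 * 2 ^ (l - 1)"
proof (induction r)
  case 0
  then show ?case by simp
next
  case (Suc r)
  show ?case
  proof (cases "x < 2 ^ r")
    case True
    with Suc obtain l where "l \<in> {1..r}" "2 ^ (l - 1) \<le> x \<and> x < 2 * 2 ^ (l - 1)" by blast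
    then show ?thesis by (intro bexI[of _ l]) auto
  next
    case False
    then show ?thesis using Suc.prems by (intro bexI[of _ "Suc r"]) auto
  qed
qed

lemma strong_SOS_gain_le_dyadic_buckets:
  fixes g :: "('a \<Rightarrow> nat) \<Rightarrow> real"
  assumes sos: "strong_SOS k d g" and nn: "\<And>s. valid_profile k s \<Longrightarrow> 0 \<le> g s"
    and mono: "\<And>s j x y. valid_profile k s \<Longrightarrow> x \<le> y \<Longrightarrow> y < k \<Longrightarrow> g (s(j := x)) \<le> g (s(j := y))"
    and d: "0 \<le> d" and vs: "valid_profile k s" and k: "k = 2 ^ r"
  shows "g s - g (s(i := 0))
           \<le> d * (d + 1) * (\<Sum>l\<in>{1..r}. if 2 ^ (l - 1) \<le> s i then g (cap_signals (2 ^ (l - 1)) s) else 0)"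
    (is "_ \<le> d * (d + 1) * (\<Sum>l\<in>{1..r}. ?c l)")
proof -
  have c_nonneg: "0 \<le> ?c l" for l
    using nn valid_profile_le[OF vs, of "cap_signals (2 ^ (l - 1)) s"] by (simp add: cap_signals_def)
  show ?thesis
  proof (cases "s i = 0")
    case True
    then have "s(i := 0) = s" by auto
    then show ?thesis using c_nonneg d by (simp add: sum_nonneg)
  next
    case False
    moreover have "s i < 2 ^ r" using vs k by (simp add: valid_profile_def)
    ultimately obtain l where l: "l \<in> {1..r}" "2 ^ (l - 1) \<le> s i" "s i < 2 * 2 ^ (l - 1)"
      using dyadic_bucket_exists[of "s i" r] by auto
    have "g s - g (s(i := 0)) \<le> (d + 1) * (g (s(i := 2 ^ (l - 1))) - g (s(i := 0)))"
      by (rule strong_SOS_gain_le_half_gain[OF sos mono d vs l(2,3)])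
    also have "\<dots> \<le> (d + 1) * (d * ?c l)"
      using strong_SOS_gain_le_capped[OF sos nn d vs l(2)] l(2) d by (simp add: mult_left_mono)
    also have "\<dots> \<le> d * (d + 1) * (\<Sum>l\<in>{1..r}. ?c l)"
      using member_le_sum[of l "{1..r}" ?c] l(1) c_nonneg d by (simp add: mult_left_mono)
    finally show ?thesis .
  qed
qed

lemma welfare_max_rule_outside:
  "is_welfare_max_rule sel \<Longrightarrow> i \<notin> N \<Longrightarrow> sel N w i = {}"
  unfolding is_welfare_max_rule_def by blast

lemma welfare_max_rule_ge_underestimate:
  fixes w u :: "'a \<Rightarrow> 'b set \<Rightarrow> real"
  assumes sel: "is_welfare_max_rule sel" and "feasible A"
    and outside: "\<And>i T. i \<notin> N \<Longrightarrow> w i T = 0" and under: "\<And>i T. w i T \<le> u i T"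
  shows "(\<Sum>i\<in>UNIV. w i (A i)) \<le> (\<Sum>i\<in>UNIV. u i (sel N w i))"
proof -
  define A' where "A' i = (if i \<in> N then A i else {})" for i
  have "feasible A'" and "\<forall>i. i \<notin> N \<longrightarrow> A' i = {}"
    using \<open>feasible A\<close> by (auto simp: feasible_def A'_def)
  then have "(\<Sum>i\<in>UNIV. w i (A' i)) \<le> (\<Sum>i\<in>UNIV. w i (sel N w i))"
    using sel unfolding is_welfare_max_rule_def by blast
  moreover have "(\<Sum>i\<in>UNIV. w i (A' i)) = (\<Sum>i\<in>UNIV. w i (A i))"
    by (rule sum.cong) (auto simp: A'_def outside)
  moreover have "(\<Sum>i\<in>UNIV. w i (sel N w i)) \<le> (\<Sum>i\<in>UNIV. u i (sel N w i))"
    by (rule sum_mono) (rule under)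
  ultimately show ?thesis by linarith
qed

lemma valid_valuations_nonneg: "valid_valuations k d v \<Longrightarrow> valid_profile k s \<Longrightarrow> 0 \<le> v i T s"
  unfolding valid_valuations_def by auto

lemma valid_valuations_empty: "valid_valuations k d v \<Longrightarrow> v i {} s = 0"
  unfolding valid_valuations_def by auto

lemma valid_valuations_mono:
  "valid_valuations k d v \<Longrightarrow> valid_profile k s \<Longrightarrow> x \<le> y \<Longrightarrow> y < k
     \<Longrightarrow> v i T (s(j := x)) \<le> v i T (s(j := y))"
  unfolding valid_valuations_def by auto

lemma valid_valuations_strong_SOS: "valid_valuations k d v \<Longrightarrow> strong_SOS k d (v i T)"
  unfolding valid_valuations_def by auto

lemma valid_valuations_mono_profile:
  fixes v :: "'a::finite \<Rightarrow> 'b set \<Rightarrow> ('a \<Rightarrow> nat) \<Rightarrow> real"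
  assumes "valid_valuations k d v" "valid_profile k s" "\<And>j. s' j \<le> s j"
  shows "v i T s' \<le> v i T s"
  by (rule coordinatewise_mono_imp_mono[where f = "v i T", OF valid_valuations_mono[OF assms(1)] assms(2,3)])

lemma random_bucket_welfare_ge:
  fixes v :: "'a::finite \<Rightarrow> 'b set \<Rightarrow> ('a \<Rightarrow> nat) \<Rightarrow> real"
  assumes vv: "valid_valuations k d v" and sel: "is_welfare_max_rule sel"
    and vs: "valid_profile k s" and "feasible Opt"
  shows "(\<Sum>i\<in>UNIV. if 2 ^ (l - 1) \<le> s i then v i (Opt i) (cap_signals (2 ^ (l - 1)) s) else 0)
           \<le> welfare v s (fst (random_bucket sel v l s))"
proof -
  define w where "w = (\<lambda>i T. if 2 ^ (l - 1) \<le> s i then v i T (cap_signals (2 ^ (l - 1)) s) else 0)"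
  have cap: "(\<lambda>j. if j \<in> {i. 2 ^ (l - 1) \<le> s i} then 2 ^ (l - 1) else s j) = cap_signals (2 ^ (l - 1)) s"
    by (auto simp: cap_signals_def)
  have "fst (random_bucket sel v l s) = sel {i. 2 ^ (l - 1) \<le> s i} w"
    unfolding random_bucket_def Let_def cap by (simp add: w_def)
  moreover have "w i T \<le> v i T s" for i T
    using valid_valuations_mono_profile[OF vv vs] valid_valuations_nonneg[OF vv vs]
    by (simp add: w_def cap_signals_def)
  ultimately show ?thesis
    using welfare_max_rule_ge_underestimate[OF sel \<open>feasible Opt\<close>, of "{i. 2 ^ (l - 1) \<le> s i}" w "\<lambda>i T. v i T s"]
    by (simp add: welfare_def w_def)
qed

lemma random_sampling_welfare_ge:
  fixes v :: "'a::finite \<Rightarrow> 'b set \<Rightarrow> ('a \<Rightarrow> nat) \<Rightarrow> real"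
  assumes vv: "valid_valuations k d v" and sel: "is_welfare_max_rule sel"
    and vs: "valid_profile k s" and "feasible Opt"
  shows "(\<Sum>i\<in>UNIV. if i \<notin> A then v i (Opt i) (restrict_signals s A) else 0)
           \<le> welfare v s (fst (random_sampling sel v A s))"
proof -
  define w where "w = (\<lambda>i T. if i \<notin> A then v i T (restrict_signals s A) else 0)"
  have restrict: "(\<lambda>j. if j \<in> A then s j else 0) = restrict_signals s A"
    by (auto simp: restrict_signals_def)
  have "fst (random_sampling sel v A s) = sel (- A) w"
    unfolding random_sampling_def Let_def restrict by (simp add: w_def)
  moreover have "w i T \<le> v i T s" for i T
    using valid_valuations_mono_profile[OF vv vs] valid_valuations_nonneg[OF vv vs]
    by (simp add: w_def restrict_signals_def)
  ultimately show ?thesis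
    using welfare_max_rule_ge_underestimate[OF sel \<open>feasible Opt\<close>, of "- A" w "\<lambda>i T. v i T s"]
    by (simp add: welfare_def w_def)
qed

lemma random_bucket_utility_below:
  assumes "valid_valuations k d v" and "is_welfare_max_rule sel" and "\<not> 2 ^ (l - 1) \<le> \<rho> i"
  shows "utility v (random_bucket sel v l) s i \<rho> = 0"
  using assms unfolding utility_def random_bucket_def Let_def
  by (simp add: welfare_max_rule_outside valid_valuations_empty)

text \<open>Above the threshold, agent i's bundle does not depend on its report.\<close>
lemma random_bucket_utility_above:
  assumes "2 ^ (l - 1) \<le> x"
  shows "utility v (random_bucket sel v l) s i (s(i := x))
           = v i (fst (random_bucket sel v l (s(i := 2 ^ (l - 1)))) i) s
             - v i (fst (random_bucket sel v l (s(i := 2 ^ (l - 1)))) i) (s(i := 2 ^ (l - 1) - 1))"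
proof -
  let ?t = "2 ^ (l - 1) :: nat"
  have N: "{j. ?t \<le> (s(i := x)) j} = {j. ?t \<le> (s(i := ?t)) j}" using assms by auto
  have cap: "(\<lambda>j. if j \<in> {j. ?t \<le> (s(i := ?t)) j} then ?t else (s(i := x)) j)
        = (\<lambda>j. if j \<in> {j. ?t \<le> (s(i := ?t)) j} then ?t else (s(i := ?t)) j)"
    by auto
  show ?thesis unfolding utility_def random_bucket_def Let_def N cap by simp
qed

lemma random_bucket_expost_IC_IR:
  fixes v :: "'a::finite \<Rightarrow> 'b set \<Rightarrow> ('a \<Rightarrow> nat) \<Rightarrow> real"
  assumes vv: "valid_valuations k d v" and sel: "is_welfare_max_rule sel"
    and k: "k = 2 ^ r" and l: "l \<in> {1..r}"
  shows "expost_IC_IR k v (random_bucket sel v l)"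
  unfolding expost_IC_IR_def
proof (intro allI impI)
  fix s :: "'a \<Rightarrow> nat" and i :: 'a
  assume vs: "valid_profile k s"
  define t :: nat where "t = 2 ^ (l - 1)"
  have "t \<le> k" unfolding t_def k using l by (intro power_increasing) auto
  have "s i < k" using vs by (simp add: valid_profile_def)
  let ?u = "utility v (random_bucket sel v l) s i"
  define B where "B = fst (random_bucket sel v l (s(i := t))) i"
  have above: "?u (s(i := x)) = v i B s - v i B (s(i := t - 1))" if "t \<le> x" for x
    using random_bucket_utility_above[of l x] that unfolding B_def t_def by simp
  have below: "?u (s(i := x)) = 0" if "\<not> t \<le> x" for x
    using random_bucket_utility_below[OF vv sel] that unfolding t_def by simp
  show "0 \<le> ?u s \<and> (\<forall>x<k. ?u (s(i := x)) \<le> ?u s)"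
  proof (cases "t \<le> s i")
    case True
    have "v i B (s(i := t - 1)) \<le> v i B (s(i := s i))"
      using valid_valuations_mono[OF vv vs, of "t - 1" "s i" i B i] True \<open>s i < k\<close> by simp
    then have "?u s = v i B s - v i B (s(i := t - 1))" "0 \<le> ?u s"
      using above[of "s i"] True by simp_all
    moreover have "?u (s(i := x)) \<le> ?u s" for x
      using above[of x] below[of x] calculation by (cases "t \<le> x") auto
    ultimately show ?thesis by blast
  next
    case False
    have "v i B (s(i := s i)) \<le> v i B (s(i := t - 1))"
      using valid_valuations_mono[OF vv vs, of "s i" "t - 1" i B i] False \<open>t \<le> k\<close> by simp
    then have "?u (s(i := x)) \<le> 0" for x
      using above[of x] below[of x] by fastforce
    moreover have "?u s = 0" using below[of "s i"] False by simp
    ultimately show ?thesis by simp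
  qed
qed

lemma random_sampling_expost_IC_IR:
  fixes v :: "'a \<Rightarrow> 'b set \<Rightarrow> ('a \<Rightarrow> nat) \<Rightarrow> real"
  assumes vv: "valid_valuations k d v" and sel: "is_welfare_max_rule sel"
  shows "expost_IC_IR k v (random_sampling sel v A)"
  unfolding expost_IC_IR_def
proof (intro allI impI)
  fix s :: "'a \<Rightarrow> nat" and i :: 'a
  assume vs: "valid_profile k s"
  have same_bundle: "fst (random_sampling sel v A (s(i := x))) i = fst (random_sampling sel v A s) i" for x
  proof (cases "i \<in> A")
    case True
    then show ?thesis unfolding random_sampling_def Let_def by (simp add: welfare_max_rule_outside[OF sel])
  next
    case False
    then have "(\<lambda>j. if j \<in> A then (s(i := x)) j else 0) = (\<lambda>j. if j \<in> A then s j else 0)"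
      by auto
    then show ?thesis unfolding random_sampling_def Let_def by (simp only: fst_conv)
  qed
  have "snd (random_sampling sel v A \<rho>) = (\<lambda>i. 0)" for \<rho>
    unfolding random_sampling_def Let_def by simp
  then show "0 \<le> utility v (random_sampling sel v A) s i s \<and>
      (\<forall>x<k. utility v (random_sampling sel v A) s i (s(i := x)) \<le> utility v (random_sampling sel v A) s i s)"
    unfolding utility_def same_bundle using valid_valuations_nonneg[OF vv vs] by simp
qed

lemma opt_welfare_attained:
  fixes v :: "'a::finite \<Rightarrow> 'b::finite set \<Rightarrow> ('a \<Rightarrow> nat) \<Rightarrow> real"
  obtains Opt where "feasible Opt" "opt_welfare v s = welfare v s Opt"
proof -
  have "feasible (\<lambda>_. {} :: 'b set)" by (simp add: feasible_def)
  then have "welfare v s ` {A. feasible A} \<noteq> {}" by blast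
  from Max_in[OF _ this] that show ?thesis unfolding opt_welfare_def by auto
qed

lemma random_bucket_total_welfare_ge:
  fixes v :: "'a::finite \<Rightarrow> 'b set \<Rightarrow> ('a \<Rightarrow> nat) \<Rightarrow> real"
  assumes d: "0 \<le> d" and vv: "valid_valuations k d v" and sel: "is_welfare_max_rule sel"
    and vs: "valid_profile k s" and k: "k = 2 ^ r" and "feasible Opt"
  shows "(\<Sum>i\<in>UNIV. v i (Opt i) s - v i (Opt i) (s(i := 0)))
           \<le> d * (d + 1) * (\<Sum>l\<in>{1..r}. welfare v s (fst (random_bucket sel v l s)))"
proof -
  define c where "c l i = (if 2 ^ (l - 1) \<le> s i then v i (Opt i) (cap_signals (2 ^ (l - 1)) s) else 0)"
    for l i
  have "(\<Sum>i\<in>UNIV. v i (Opt i) s - v i (Opt i) (s(i := 0))) \<le> (\<Sum>i\<in>UNIV. d * (d + 1) * (\<Sum>l\<in>{1..r}. c l i))"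
    unfolding c_def
    by (intro sum_mono strong_SOS_gain_le_dyadic_buckets[OF _ _ _ d vs k]
        valid_valuations_strong_SOS[OF vv] valid_valuations_nonneg[OF vv] valid_valuations_mono[OF vv])
  also have "\<dots> = d * (d + 1) * (\<Sum>l\<in>{1..r}. \<Sum>i\<in>UNIV. c l i)"
    by (subst sum.swap) (simp add: sum_distrib_left)
  also have "\<dots> \<le> d * (d + 1) * (\<Sum>l\<in>{1..r}. welfare v s (fst (random_bucket sel v l s)))"
    unfolding c_def using d
    by (intro mult_left_mono sum_mono random_bucket_welfare_ge[OF vv sel vs \<open>feasible Opt\<close>]) auto
  finally show ?thesis .
qed

lemma random_sampling_total_welfare_ge:
  fixes v :: "'a::finite \<Rightarrow> 'b set \<Rightarrow> ('a \<Rightarrow> nat) \<Rightarrow> real"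
  assumes d: "0 \<le> d" and vv: "valid_valuations k d v" and sel: "is_welfare_max_rule sel"
    and vs: "valid_profile k s" and "feasible Opt"
  shows "2 ^ card (UNIV :: 'a set) * (\<Sum>i\<in>UNIV. v i (Opt i) (s(i := 0)))
           \<le> 2 * (d + 1) * (\<Sum>A\<in>UNIV. welfare v s (fst (random_sampling sel v A s)))"
proof -
  define c where "c A i = (if i \<notin> A then v i (Opt i) (restrict_signals s A) else 0)" for A i
  have "2 ^ card (UNIV :: 'a set) * (\<Sum>i\<in>UNIV. v i (Opt i) (s(i := 0)))
        = (\<Sum>i\<in>UNIV. 2 ^ card (UNIV :: 'a set) * v i (Opt i) (s(i := 0)))"
    by (rule sum_distrib_left)
  also have "\<dots> \<le> (\<Sum>i\<in>UNIV. 2 * (d + 1) * (\<Sum>A\<in>UNIV. c A i))"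
    unfolding c_def
    by (intro sum_mono strong_SOS_random_sampling_le[OF _ _ d vs]
        valid_valuations_strong_SOS[OF vv] valid_valuations_nonneg[OF vv])
  also have "\<dots> = 2 * (d + 1) * (\<Sum>A\<in>UNIV. \<Sum>i\<in>UNIV. c A i)"
    by (subst sum.swap) (simp add: sum_distrib_left)
  also have "\<dots> \<le> 2 * (d + 1) * (\<Sum>A\<in>UNIV. welfare v s (fst (random_sampling sel v A s)))"
    unfolding c_def using d
    by (intro mult_left_mono sum_mono random_sampling_welfare_ge[OF vv sel vs \<open>feasible Opt\<close>]) auto
  finally show ?thesis .
qed

lemma mixing_weights_eq:
  fixes d R a b :: real
  assumes "0 < d" and "0 < R"
  shows "(d * (d + 1) * R + 2 * (d + 1)) * (d * R / (d * R + 2) * a + (1 - d * R / (d * R + 2)) * b)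
           = d * (d + 1) * R * a + 2 * (d + 1) * b"
proof -
  have D: "d * R + 2 \<noteq> 0" using assms by (smt (verit) mult_pos_pos)
  have factor: "d * (d + 1) * R + 2 * (d + 1) = (d + 1) * (d * R + 2)" by (simp add: algebra_simps)
  have complement: "1 - d * R / (d * R + 2) = 2 / (d * R + 2)" using D by (simp add: field_simps)
  have cancel: "D * (x / D * a + y / D * b) = x * a + y * b" if "D \<noteq> 0" for D x y :: real
    using that by (simp add: field_simps)
  have "(d * (d + 1) * R + 2 * (d + 1)) * (d * R / (d * R + 2) * a + (1 - d * R / (d * R + 2)) * b)
        = (d + 1) * ((d * R + 2) * (d * R / (d * R + 2) * a + 2 / (d * R + 2) * b))"
    unfolding factor complement by (simp only: mult.assoc)
  also have "\<dots> = (d + 1) * (d * R * a + 2 * b)" by (simp only: cancel[OF D])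
  finally show ?thesis by (simp add: algebra_simps)
qed

lemma combined_mechanism_approximation:
  fixes v :: "'a::finite \<Rightarrow> 'b::finite set \<Rightarrow> ('a \<Rightarrow> nat) \<Rightarrow> real"
  assumes d: "0 < d" and k: "k = 2 ^ r" and r: "1 \<le> r"
    and vv: "valid_valuations k d v" and sel: "is_welfare_max_rule sel" and vs: "valid_profile k s"
  shows "opt_welfare v s \<le> (d * (d + 1) * real r + 2 * (d + 1))
           * combined_expected_welfare sel v r (d * real r / (d * real r + 2)) s"
proof -
  obtain Opt where Opt: "feasible Opt" "opt_welfare v s = welfare v s Opt"
    by (rule opt_welfare_attained)
  define own where "own = (\<Sum>i\<in>UNIV. v i (Opt i) s - v i (Opt i) (s(i := 0)))"
  define others where "others = (\<Sum>i\<in>UNIV. v i (Opt i) (s(i := 0)))"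
  define bucket where "bucket = (\<Sum>l\<in>{1..r}. welfare v s (fst (random_bucket sel v l s))) / real r"
  define sampling where "sampling = (\<Sum>A\<in>UNIV. welfare v s (fst (random_sampling sel v A s))) / 2 ^ card (UNIV :: 'a set)"
  have "opt_welfare v s = own + others"
    by (simp add: Opt(2) welfare_def own_def others_def sum_subtractf)
  moreover have "own \<le> d * (d + 1) * real r * bucket"
    using random_bucket_total_welfare_ge[OF _ vv sel vs k Opt(1)] d r by (simp add: own_def bucket_def)
  moreover have "others \<le> 2 * (d + 1) * sampling"
    using random_sampling_total_welfare_ge[OF _ vv sel vs Opt(1)] d
    by (simp add: others_def sampling_def field_simps)
  ultimately show ?thesis
    using mixing_weights_eq[OF d, of "real r" bucket sampling] r
    by (simp add: combined_expected_welfare_def bucket_def sampling_def)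
qed

theorem mainTheorem16:
  fixes v :: "'a::finite \<Rightarrow> 'b::finite set \<Rightarrow> ('a \<Rightarrow> nat) \<Rightarrow> real"
    and sel :: "'a set \<Rightarrow> ('a \<Rightarrow> 'b set \<Rightarrow> real) \<Rightarrow> ('a \<Rightarrow> 'b set)"
    and d :: real and k r :: nat
  assumes "d \<ge> 1"
    and "k = 2 ^ r" and "r \<ge> 1"
    and "valid_valuations k d v"
    and "is_welfare_max_rule sel"
  shows "(\<forall>l\<in>{1..r}. expost_IC_IR k v (random_bucket sel v l))
       \<and> (\<forall>As. expost_IC_IR k v (random_sampling sel v As))
       \<and> (\<forall>s. valid_profile k s \<longrightarrow>
            opt_welfare v s \<le> (d * (d + 1) * real r + 2 * (d + 1))
              * combined_expected_welfare sel v r (d * real r / (d * real r + 2)) s)"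
  using random_bucket_expost_IC_IR[OF assms(4,5,2)] random_sampling_expost_IC_IR[OF assms(4,5)]
    combined_mechanism_approximation[OF _ assms(2,3,4,5)] assms(1) by auto

end
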